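(* Let $N\ge 1$, let $q\in\mathbb{C}$ with $[k]_q\neq 0$ for all $k\ge1$, and set $g(k)=[k]_q$ for $k\ge 1$ (so $g(1)=1$, $g(2)=1+q$). Let $u^0:\mathbb{Z}^N\times[0,\infty)\to\mathbb{C}$ be differentiable in $t$ and satisfy, for all $(x_N,\dots,x_1)\in\mathbb{Z}^N$ and $t\ge 0$, $$\frac{d}{dt}u^0(x_N,\dots,x_1;t)=\sum_{i=1}^N u^0(x_N,\dots,x_{i+1},x_i-1,x_{i-1},\dots,x_1;t)-N\,u^0(x_N,\dots,x_1;t),$$ and, for every $2\le i\le N$ and all integer arguments, $$u^0(\dots,x_{i+1},x_i,x_i-1,x_{i-2},\dots;t)=q\,u^0(\dots,x_{i+1},x_i-1,x_i,x_{i-2},\dots;t)-(q-1)\,u^0(\dots,x_{i+1},x_i,x_i,x_{i-2},\dots;t).$$ Define, for $X\in\mathbf{S}$, $u(X;t)=u^0(X;t)\big/\prod_{\mathbf{x}\in\Lambda(X)}\prod_{k=1}^{\eta_X(\mathbf{x})}g(k)$. Let $X\in\mathbf{S}$ be such that, for some $K\ge0$, $n\ge1$ with $K+n\le N$, $x_{K+1}=\cdots=x_{K+n}=x$ and every site of $\Lambda(X)$ other than $x$ is occupied by exactly one particle. Then $$\frac{d}{dt}u(X;t)=\sum_{\mathbf{x}\in\Lambda(X)} g\big(\eta_{X^{\mathbf{x}}}(\mathbf{x}-1)\big)\,u(X^{\mathbf{x}};t)-\Big(\sum_{\mathbf{x}\in\Lambda(X)}g(\eta_X(\mathbf{x}))\Big)u(X;t),$$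 i.e. $u$ satisfies at $X$ the master equation of the totally asymmetric zero range process with jump rates $g$.
   Context: $[k]_q:=1+q+\cdots+q^{k-1}$. $\mathbf{S}=\{(x_N,\dots,x_1)\in\mathbb{Z}^N: x_N\le x_{N-1}\le\cdots\le x_1\}$ is the set of configurations of $N$ indistinguishable particles on $\mathbb{Z}$ ($x_j$ = position of the $j$-th right-most particle). For $X\in\mathbf{S}$, $\Lambda(X)$ is the set of occupied sites and $\eta_X(\mathbf{x})$ is the number of particles of $X$ at site $\mathbf{x}$. For $\mathbf{x}\in\Lambda(X)$, $X^{\mathbf{x}}\in\mathbf{S}$ denotes the configuration obtained from $X$ by moving one particle from site $\mathbf{x}$ to site $\mathbf{x}-1$. (In the totally asymmetric zero range process with rates $g$, a site occupied by $k$ particles emits one particle to the right neighbour at rate $g(k)$.) *)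

theory Defs
  imports Complex_Main
begin

text \<open>Configurations of N particles are represented as integer lists
  xs = [x_1, x_2, ..., x_N] (so x_j = xs ! (j-1)); membership in S means
  x_N \<le> ... \<le> x_1, i.e. the list is non-increasing.\<close>

definition in_S :: "nat \<Rightarrow> int list \<Rightarrow> bool" where
  "in_S N xs \<longleftrightarrow> length xs = N \<and> sorted (rev xs)"

definition qint :: "complex \<Rightarrow> nat \<Rightarrow> complex" where
  "qint q k = (\<Sum>i<k. q ^ i)"

definition sites :: "int list \<Rightarrow> int set" where
  "sites xs = set xs"

definition eta :: "int list \<Rightarrow> int \<Rightarrow> nat" where
  "eta xs y = count_list xs y"

text \<open>X^y: move one particle from site y to site y-1; the result is the
  element of S with the corresponding multiset of positions.\<close>
definition move :: "int list \<Rightarrow> int \<Rightarrow> int list" where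
  "move xs y = rev (insort (y - 1) (remove1 y (rev xs)))"

definition u_of :: "complex \<Rightarrow> (int list \<Rightarrow> real \<Rightarrow> complex) \<Rightarrow> int list \<Rightarrow> real \<Rightarrow> complex" where
  "u_of q u0 xs t = u0 xs t / (\<Prod>y\<in>sites xs. \<Prod>k\<in>{1..eta xs y}. qint q k)"

end

theory Submission
  imports Defs "HOL-Library.Multiset"
begin

text \<open>
  Let \<open>W(X)\<close> be the product over occupied sites \<open>y\<close> of the q-factorials \<open>[\<eta>_X(y)]_q!\<close>,
  so that \<open>u = u0 / W\<close>. In the free equation for \<open>u0\<close> group the particles by site.
  Within a block of \<open>m\<close> particles at site \<open>y\<close>, the exchange relation says that the
  increment of \<open>u0\<close> caused by moving particle \<open>j\<close> left is \<open>q\<close> times the increment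
  caused by moving particle \<open>j+1\<close>; hence the block contributes \<open>[m]_q\<close> times the
  increment for its last particle, which is \<open>u0(X^y) - u0(X)\<close>. Dividing by \<open>W(X)\<close> and
  using \<open>W(X^y) [\<eta>_X(y)]_q = W(X) [\<eta>_{X^y}(y-1)]_q\<close> gives the master equation.
\<close>

lemma sorted_rev_block:
  assumes sorted: "sorted (rev X)" and y: "y \<in> set X"
  obtains a where "{i. i < length X \<and> X ! i = y} = {a..<a + count_list X y}"
    and "count_list X y \<ge> 1"
proof -
  define I where "I = {i. i < length X \<and> X ! i = y}"
  have card_I: "card I = count_list X y"
    unfolding I_def count_list_eq_length_filter length_filter_conv_card by metis
  have "finite I" unfolding I_def by simp
  moreover have "I \<noteq> {}" using y unfolding I_def by (auto simp: in_set_conv_nth)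
  ultimately have min: "Min I \<in> I" and max: "Max I \<in> I" and "card I \<ge> 1"
    by (auto simp: Suc_le_eq card_gt_0_iff)
  have "{Min I..Max I} \<subseteq> I"
  proof
    fix j assume j: "j \<in> {Min I..Max I}"
    have "Max I < length X" "X ! Min I = y" "X ! Max I = y" using min max unfolding I_def by auto
    then have "j < length X" using j by auto
    then have "X ! j \<le> y" "y \<le> X ! j"
      using j sorted_rev_nth_mono[OF sorted, of "Min I" j] sorted_rev_nth_mono[OF sorted, of j "Max I"]
        \<open>Max I < length X\<close> \<open>X ! Min I = y\<close> \<open>X ! Max I = y\<close> by auto
    then show "j \<in> I" using \<open>j < length X\<close> unfolding I_def by auto
  qed
  moreover have "I \<subseteq> {Min I..Max I}" using \<open>finite I\<close> by auto
  ultimately have I: "I = {Min I..Max I}" by blast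
  moreover have "Min I \<le> Max I" using \<open>finite I\<close> max by simp
  moreover have "card I = Suc (Max I) - Min I" using I by (metis card_atLeastAtMost)
  ultimately have "Min I + card I = Suc (Max I)" by linarith
  then have "I = {Min I..<Min I + card I}" using I by (simp add: atLeastLessThanSuc_atLeastAtMost)
  then show thesis using that card_I \<open>card I \<ge> 1\<close> unfolding I_def by auto
qed

lemma move_last_of_block:
  assumes sorted: "sorted (rev X)" and i: "i < length X" "X ! i = y"
    and last: "Suc i < length X \<Longrightarrow> X ! Suc i < y"
  shows "move X y = X[i := y - 1]"
proof -
  have "sorted (rev (X[i := y - 1]))"
    unfolding sorted_rev_iff_nth_mono
  proof (intro allI impI)
    fix a b assume ab: "a \<le> b" "b < length (X[i := y - 1])"
    have "X ! b \<le> X ! a" using sorted_rev_nth_mono[OF sorted] ab by simp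
    moreover have "X ! b \<le> X ! Suc i" if "Suc i \<le> b"
      using sorted_rev_nth_mono[OF sorted] that ab by simp
    moreover have "X ! b < y" if "a = i" "b \<noteq> i"
      using calculation(2) last ab that by fastforce
    moreover have "y \<le> X ! a" if "b = i"
      using sorted_rev_nth_mono[OF sorted, of a i] ab that i by simp
    ultimately show "X[i := y - 1] ! b \<le> X[i := y - 1] ! a"
      using ab i by (cases "a = i"; cases "b = i") auto
  qed
  moreover have "sorted (insort (y - 1) (remove1 y (rev X)))"
    using sorted by (simp add: sorted_insort sorted_remove1)
  moreover have "mset (rev (X[i := y - 1])) = mset (insort (y - 1) (remove1 y (rev X)))"
    using i by (simp add: mset_update)
  ultimately have "insort (y - 1) (remove1 y (rev X)) = rev (X[i := y - 1])"
    by (metis properties_for_sort)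
  then show ?thesis unfolding move_def by simp
qed

lemma count_list_move:
  "count_list (move X y) z = count_list X z - (if z = y then 1 else 0) + (if z = y - 1 then 1 else 0)"
  by (simp add: move_def flip: count_mset)

lemma sum_by_geometric_recurrence:
  fixes f :: "nat \<Rightarrow> 'a :: comm_ring_1"
  assumes "\<And>j. a \<le> j \<Longrightarrow> j < a + m \<Longrightarrow> f j = q * f (Suc j)"
  shows "(\<Sum>j\<in>{a..<a + Suc m}. f j) = (\<Sum>k<Suc m. q ^ k) * f (a + m)"
  using assms
proof (induction m)
  case (Suc m)
  have "(\<Sum>j\<in>{a..<a + Suc (Suc m)}. f j) = (\<Sum>k<Suc m. q ^ k) * f (a + m) + f (a + Suc m)"
    using Suc by simp
  also have "\<dots> = ((\<Sum>k<Suc m. q ^ k) * q + 1) * f (a + Suc m)"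
    using Suc.prems[of "a + m"] by (simp add: algebra_simps)
  also have "(\<Sum>k<Suc m. q ^ k) * q + 1 = (\<Sum>k<Suc (Suc m). q ^ k)"
    by (subst (2) sum.lessThan_Suc_shift) (simp add: sum_distrib_left algebra_simps)
  finally show ?case .
qed simp

lemma block_sum_by_exchange:
  fixes u :: "int list \<Rightarrow> complex"
  assumes exch: "\<And>xs i a. length xs = N \<Longrightarrow> 1 \<le> i \<Longrightarrow> i < N \<Longrightarrow>
        u (xs[i := a, i - 1 := a - 1]) = q * u (xs[i := a - 1, i - 1 := a]) - (q - 1) * u (xs[i := a, i - 1 := a])"
    and sorted: "sorted (rev X)" and len: "length X = N" and y: "y \<in> set X"
  shows "(\<Sum>i | i < N \<and> X ! i = y. u (X[i := y - 1]) - u X) = qint q (count_list X y) * (u (move X y) - u X)"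
proof -
  obtain a where block: "{i. i < N \<and> X ! i = y} = {a..<a + count_list X y}" and "count_list X y \<ge> 1"
    using sorted_rev_block[OF sorted y] len by metis
  then obtain m where m: "count_list X y = Suc m" by (cases "count_list X y") auto
  have mem: "i < N \<and> X ! i = y \<longleftrightarrow> a \<le> i \<and> i < a + Suc m" for i
    using block m by (auto simp: set_eq_iff)
  define f where "f j = u (X[j := y - 1]) - u X" for j
  have "f j = q * f (Suc j)" if "a \<le> j" "j < a + m" for j
  proof -
    have j: "X ! j = y" "X ! Suc j = y" "Suc j < N" using mem[of j] mem[of "Suc j"] that by auto
    have "X[Suc j := y, j := y - 1] = X[j := y - 1]" and "X[Suc j := y, j := y] = X"
      using j by (metis list_update_id)+
    moreover have "X[Suc j := y - 1, j := y] = X[Suc j := y - 1]"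
      using j by (metis list_update_id list_update_swap n_not_Suc_n)
    ultimately have "u (X[j := y - 1]) = q * u (X[Suc j := y - 1]) - (q - 1) * u X"
      using exch[of X "Suc j" y] len j by simp
    then show ?thesis unfolding f_def by (simp add: algebra_simps)
  qed
  then have "(\<Sum>i\<in>{a..<a + Suc m}. f i) = qint q (Suc m) * f (a + m)"
    unfolding qint_def by (rule sum_by_geometric_recurrence)
  moreover have "move X y = X[a + m := y - 1]"
  proof (rule move_last_of_block[OF sorted])
    show "a + m < length X" "X ! (a + m) = y" using mem[of "a + m"] len by auto
    assume "Suc (a + m) < length X"
    then show "X ! Suc (a + m) < y"
      using mem[of "Suc (a + m)"] sorted_rev_nth_mono[OF sorted, of "a + m" "Suc (a + m)"]
        \<open>X ! (a + m) = y\<close> len by fastforce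
  qed
  ultimately show ?thesis using block m unfolding f_def by simp
qed

lemma jump_sum_by_site:
  fixes u :: "int list \<Rightarrow> complex"
  assumes exch: "\<And>xs i a. length xs = N \<Longrightarrow> 1 \<le> i \<Longrightarrow> i < N \<Longrightarrow>
        u (xs[i := a, i - 1 := a - 1]) = q * u (xs[i := a - 1, i - 1 := a]) - (q - 1) * u (xs[i := a, i - 1 := a])"
    and sorted: "sorted (rev X)" and len: "length X = N"
  shows "(\<Sum>i<N. u (X[i := X ! i - 1])) - of_nat N * u X
       = (\<Sum>y\<in>set X. qint q (count_list X y) * (u (move X y) - u X))"
proof -
  have "(\<Sum>i<N. u (X[i := X ! i - 1])) - of_nat N * u X = (\<Sum>i<N. u (X[i := X ! i - 1]) - u X)"
    by (simp add: sum_subtractf)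
  also have "\<dots> = (\<Sum>y\<in>set X. \<Sum>i | i \<in> {..<N} \<and> X ! i = y. u (X[i := X ! i - 1]) - u X)"
    by (rule sum.group[symmetric]) (auto simp: len[symmetric])
  also have "\<dots> = (\<Sum>y\<in>set X. \<Sum>i | i < N \<and> X ! i = y. u (X[i := y - 1]) - u X)"
    by (intro sum.cong) auto
  also have "\<dots> = (\<Sum>y\<in>set X. qint q (count_list X y) * (u (move X y) - u X))"
    using block_sum_by_exchange[of N u q X, OF exch sorted len] by simp
  finally show ?thesis .
qed

definition qfact :: "complex \<Rightarrow> nat \<Rightarrow> complex" where
  "qfact q n = (\<Prod>k\<in>{1..n}. qint q k)"

definition qweight :: "complex \<Rightarrow> int list \<Rightarrow> complex" where
  "qweight q xs = (\<Prod>y\<in>set xs. qfact q (count_list xs y))"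

lemma u_of_eq_div_qweight: "u_of q u0 xs t = u0 xs t / qweight q xs"
  unfolding u_of_def qweight_def qfact_def sites_def eta_def by simp

lemma qfact_Suc: "qfact q (Suc n) = qfact q n * qint q (Suc n)"
  unfolding qfact_def by simp

lemma qweight_nonzero: "\<forall>k\<ge>1. qint q k \<noteq> 0 \<Longrightarrow> qweight q xs \<noteq> 0"
  unfolding qweight_def qfact_def by auto

lemma qweight_superset:
  "set xs \<subseteq> S \<Longrightarrow> finite S \<Longrightarrow> qweight q xs = (\<Prod>y\<in>S. qfact q (count_list xs y))"
  unfolding qweight_def by (rule prod.mono_neutral_left) (auto simp: qfact_def)

lemma qweight_move:
  assumes y: "y \<in> set X"
  shows "qweight q (move X y) * qint q (count_list X y)
       = qweight q X * qint q (count_list (move X y) (y - 1))"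
proof -
  define S where "S = set X - {y} - {y - 1}"
  define c where "c = count_list X"
  define c' where "c' = count_list (move X y)"
  have "set (move X y) \<subseteq> insert (y - 1) (set X)"
    unfolding move_def by (auto dest: set_remove1_subset[THEN subsetD] simp: set_insort_key)
  have "insert (y - 1) (set X) = insert y (insert (y - 1) S)" "y \<notin> insert (y - 1) S" "y - 1 \<notin> S"
      "finite S"
    using y unfolding S_def by auto
  then have split: "\<And>g. (\<Prod>z\<in>insert (y - 1) (set X). g z) = g y * (g (y - 1) * (\<Prod>z\<in>S. g z))"
    by simp
  have c': "c' y = c y - 1" "c' (y - 1) = c (y - 1) + 1" "\<And>z. z \<in> S \<Longrightarrow> c' z = c z"
    unfolding c_def c'_def S_def by (auto simp: count_list_move)
  have "c y \<noteq> 0" using y unfolding c_def by (simp add: count_list_0_iff)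
  then have "qfact q (c y) = qfact q (c y - 1) * qint q (c y)" using qfact_Suc[of q "c y - 1"] by simp
  moreover have "qweight q X = qfact q (c y) * (qfact q (c (y - 1)) * (\<Prod>z\<in>S. qfact q (c z)))"
    using qweight_superset[of X "insert (y - 1) (set X)" q] split[of "\<lambda>z. qfact q (c z)"]
    unfolding c_def by auto
  moreover have "qweight q (move X y)
      = qfact q (c y - 1) * (qfact q (c (y - 1) + 1) * (\<Prod>z\<in>S. qfact q (c z)))"
    using qweight_superset[OF \<open>set (move X y) \<subseteq> _\<close>, of q] split[of "\<lambda>z. qfact q (c' z)"] c'
    unfolding c'_def by simp
  ultimately show ?thesis
    using c'(2) unfolding c_def[symmetric] c'_def[symmetric] by (simp add: qfact_Suc algebra_simps)
qed

lemma master_rhs_eq: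
  assumes qnz: "\<forall>k\<ge>1. qint q k \<noteq> 0"
  shows "(\<Sum>y\<in>sites X. qint q (eta (move X y) (y - 1)) * u_of q u0 (move X y) t)
          - (\<Sum>y\<in>sites X. qint q (eta X y)) * u_of q u0 X t
       = (\<Sum>y\<in>set X. qint q (count_list X y) * (u0 (move X y) t - u0 X t)) / qweight q X"
proof -
  have "qint q (eta (move X y) (y - 1)) * u_of q u0 (move X y) t
      = qint q (count_list X y) * u0 (move X y) t / qweight q X" if "y \<in> set X" for y
    using qweight_move[OF that, of q] qweight_nonzero[OF qnz]
    unfolding u_of_eq_div_qweight eta_def by (simp add: field_simps)
  then show ?thesis
    unfolding sites_def eta_def u_of_eq_div_qweight
    by (simp add: right_diff_distrib sum_subtractf diff_divide_distrib sum_divide_distrib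
        sum_distrib_right)
qed

theorem proposition1:
  fixes N :: nat and q :: complex and u0 :: "int list \<Rightarrow> real \<Rightarrow> complex"
    and X :: "int list" and t :: real
  assumes N1: "N \<ge> 1"
    and qnz: "\<forall>k\<ge>1. qint q k \<noteq> 0"
    and deriv0: "\<forall>xs s. length xs = N \<and> s \<ge> 0 \<longrightarrow>
        ((\<lambda>r. u0 xs r) has_vector_derivative
           ((\<Sum>i<N. u0 (xs[i := xs ! i - 1]) s) - of_nat N * u0 xs s)) (at s within {0..})"
    and exch: "\<forall>xs i a s. length xs = N \<and> 1 \<le> i \<and> i < N \<longrightarrow>
        u0 (xs[i := a, i - 1 := a - 1]) s =
          q * u0 (xs[i := a - 1, i - 1 := a]) s - (q - 1) * u0 (xs[i := a, i - 1 := a]) s"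
    and XS: "in_S N X"
    and Xshape: "\<exists>K n x. 1 \<le> n \<and> K + n \<le> N \<and> (\<forall>j. K \<le> j \<and> j < K + n \<longrightarrow> X ! j = x)
                   \<and> (\<forall>y\<in>sites X. y \<noteq> x \<longrightarrow> eta X y = 1)"
    and t0: "t \<ge> 0"
  shows "((\<lambda>r. u_of q u0 X r) has_vector_derivative
           ((\<Sum>y\<in>sites X. qint q (eta (move X y) (y - 1)) * u_of q u0 (move X y) t)
            - (\<Sum>y\<in>sites X. qint q (eta X y)) * u_of q u0 X t)) (at t within {0..})"
proof -
  have len: "length X = N" and sorted: "sorted (rev X)" using XS unfolding in_S_def by auto
  have jumps: "(\<Sum>i<N. u0 (X[i := X ! i - 1]) t) - of_nat N * u0 X t
      = (\<Sum>y\<in>set X. qint q (count_list X y) * (u0 (move X y) t - u0 X t))"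
    by (rule jump_sum_by_site[OF _ sorted len]) (use exch in blast)
  have "((\<lambda>r. u0 X r) has_vector_derivative
          ((\<Sum>i<N. u0 (X[i := X ! i - 1]) t) - of_nat N * u0 X t)) (at t within {0..})"
    using deriv0 len t0 by blast
  then have "((\<lambda>r. u0 X r / qweight q X) has_vector_derivative
      ((\<Sum>i<N. u0 (X[i := X ! i - 1]) t) - of_nat N * u0 X t) / qweight q X) (at t within {0..})"
    by (rule has_vector_derivative_divide)
  then show ?thesis unfolding jumps master_rhs_eq[OF qnz] unfolding u_of_eq_div_qweight .
qed

end
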